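(* A ranking method is feasible and regret-free if and only if it is faithful, consistent and efficient.
   Context: Let $\mathcal{X}$ be a finite set of alternatives and let the chair's preference $\succ$ be a fixed ranking on $\mathcal{X}$. A proto-ranking is an irreflexive transitive relation; a ranking is a total proto-ranking; a tournament is a total asymmetric relation on $\mathcal{X}$. Interaction: given a tournament $\mathrel{W}$, start from $R_0=\varnothing$; in each period with $R_{t-1}$ not total the chair offers a pair $\{x,y\}$ unranked by $R_{t-1}$, the winner is $x$ if $x\mathrel{W}y$ and $y$ otherwise, and $R_t$ is the transitive closure of $R_{t-1}\cup\{(\text{winner},\text{loser})\}$; stop when $R_t$ is total. A strategy assigns to each non-terminal history a pair unranked at it; its outcome under $\mathrel{W}$ is the final ranking. A ranking is $\mathrel{W}$-feasible if it is the outcome under $\mathrel{W}$ of some strategy; $R$ is more aligned with $\succ$ than $R'$ if for all $x\succ y$, $xR'y$ implies $xRy$; a ranking is $\mathrel{W}$-unimprovable if no other $\mathrel{W}$-feasible ranking is more aligned with $\succ$; a ranking $R$ is $\mathrel{W}$-efficient if $x\succ y$ and $x\mathrel{W}y$ imply $xRy$. A ranking method is a map $\rho$ assigning a ranking to each tournament. It is feasible if some strategy has outcome $\rho(\mathrel{W})$ under every tournament $\mathrel{W}$; regret-free if $\rho(\mathrel{W})$ is $\mathrel{W}$-unimprovable for every $\mathrel{W}$; efficient if $\rho(\mathrel{W})$ is $\mathrel{W}$-efficient for every $\mathrel{W}$. A ranking $R$ is more aligned with a tournament $\mathrel{W}$ than $R'$ if for all $x\mathrel{W}y$, $xR'y$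 implies $xRy$. $\rho$ is faithful if for every $\mathrel{W}$ no ranking $R\ne\rho(\mathrel{W})$ is more aligned with $\mathrel{W}$ than $\rho(\mathrel{W})$. $\rho$ is consistent if whenever $\rho(\mathrel{W})\ne\rho(\mathrel{W}')$ there exist $x,y$ with $x\mathrel{W}y$ and $y\mathrel{W}'x$ such that for every tournament $\mathrel{W}''\supseteq\mathrel{W}\cap\mathrel{W}'$: $x\,\rho(\mathrel{W}'')\,y$ iff $x\mathrel{W}''y$. *)

theory Defs
  imports Main
begin

definition total_rel :: "'a rel \<Rightarrow> bool" where
  "total_rel R \<longleftrightarrow> (\<forall>x y. x \<noteq> y \<longrightarrow> (x, y) \<in> R \<or> (y, x) \<in> R)"

definition proto_ranking :: "'a rel \<Rightarrow> bool" where
  "proto_ranking R \<longleftrightarrow> irrefl R \<and> trans R"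

definition ranking :: "'a rel \<Rightarrow> bool" where
  "ranking R \<longleftrightarrow> proto_ranking R \<and> total_rel R"

definition tournament :: "'a rel \<Rightarrow> bool" where
  "tournament W \<longleftrightarrow> total_rel W \<and> asym W"

(* A history is the list of (winner, loser) pairs of the periods played so far;
   its ranking is the transitive closure of these pairs. *)
definition hist_rel :: "('a \<times> 'a) list \<Rightarrow> 'a rel" where
  "hist_rel h = (set h)\<^sup>+"

definition unranked :: "'a rel \<Rightarrow> 'a \<times> 'a \<Rightarrow> bool" where
  "unranked R p \<longleftrightarrow> fst p \<noteq> snd p \<and> p \<notin> R \<and> (snd p, fst p) \<notin> R"

(* A strategy offers, at every non-terminal history, a pair {x,y} (given as (x,y))
   that is unranked at that history. *)
definition strategy :: "(('a \<times> 'a) list \<Rightarrow> 'a \<times> 'a) \<Rightarrow> bool" where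
  "strategy \<sigma> \<longleftrightarrow> (\<forall>h. \<not> total_rel (hist_rel h) \<longrightarrow> unranked (hist_rel h) (\<sigma> h))"

definition winner_loser :: "'a rel \<Rightarrow> 'a \<times> 'a \<Rightarrow> 'a \<times> 'a" where
  "winner_loser W p = (if p \<in> W then p else (snd p, fst p))"

definition step :: "(('a \<times> 'a) list \<Rightarrow> 'a \<times> 'a) \<Rightarrow> 'a rel \<Rightarrow> ('a \<times> 'a) list \<Rightarrow> ('a \<times> 'a) list" where
  "step \<sigma> W h = (if total_rel (hist_rel h) then h else h @ [winner_loser W (\<sigma> h)])"

(* Each period ranks at least one new pair, so after card UNIV ^ 2 periods the
   interaction has stopped; the outcome is the final ranking. *)
definition outcome :: "(('a::finite \<times> 'a) list \<Rightarrow> 'a \<times> 'a) \<Rightarrow> 'a rel \<Rightarrow> 'a rel" where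
  "outcome \<sigma> W = hist_rel ((step \<sigma> W ^^ (card (UNIV :: 'a set) ^ 2)) [])"

definition W_feasible :: "'a::finite rel \<Rightarrow> 'a rel \<Rightarrow> bool" where
  "W_feasible W R \<longleftrightarrow> ranking R \<and> (\<exists>\<sigma>. strategy \<sigma> \<and> outcome \<sigma> W = R)"

definition more_aligned :: "'a rel \<Rightarrow> 'a rel \<Rightarrow> 'a rel \<Rightarrow> bool" where
  "more_aligned Q R R' \<longleftrightarrow> (\<forall>x y. (x, y) \<in> Q \<longrightarrow> (x, y) \<in> R' \<longrightarrow> (x, y) \<in> R)"

definition W_unimprovable :: "'a rel \<Rightarrow> 'a::finite rel \<Rightarrow> 'a rel \<Rightarrow> bool" where
  "W_unimprovable P W R \<longleftrightarrow> ranking R \<and>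
     (\<forall>R'. W_feasible W R' \<and> R' \<noteq> R \<longrightarrow> \<not> more_aligned P R' R)"

definition W_efficient :: "'a rel \<Rightarrow> 'a rel \<Rightarrow> 'a rel \<Rightarrow> bool" where
  "W_efficient P W R \<longleftrightarrow> (\<forall>x y. (x, y) \<in> P \<longrightarrow> (x, y) \<in> W \<longrightarrow> (x, y) \<in> R)"

(* ranking methods: maps assigning a ranking to each tournament
   (values on non-tournaments are irrelevant) *)
definition ranking_method :: "('a rel \<Rightarrow> 'a rel) \<Rightarrow> bool" where
  "ranking_method \<rho> \<longleftrightarrow> (\<forall>W. tournament W \<longrightarrow> ranking (\<rho> W))"

definition feasible_method :: "('a::finite rel \<Rightarrow> 'a rel) \<Rightarrow> bool" where
  "feasible_method \<rho> \<longleftrightarrow> (\<exists>\<sigma>. strategy \<sigma> \<and> (\<forall>W. tournament W \<longrightarrow> outcome \<sigma> W = \<rho> W))"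

definition regret_free :: "'a rel \<Rightarrow> ('a::finite rel \<Rightarrow> 'a rel) \<Rightarrow> bool" where
  "regret_free P \<rho> \<longleftrightarrow> (\<forall>W. tournament W \<longrightarrow> W_unimprovable P W (\<rho> W))"

definition efficient_method :: "'a rel \<Rightarrow> ('a rel \<Rightarrow> 'a rel) \<Rightarrow> bool" where
  "efficient_method P \<rho> \<longleftrightarrow> (\<forall>W. tournament W \<longrightarrow> W_efficient P W (\<rho> W))"

definition faithful :: "('a rel \<Rightarrow> 'a rel) \<Rightarrow> bool" where
  "faithful \<rho> \<longleftrightarrow> (\<forall>W. tournament W \<longrightarrow>
     (\<forall>R. ranking R \<and> R \<noteq> \<rho> W \<longrightarrow> \<not> more_aligned W R (\<rho> W)))"

definition consistent :: "('a rel \<Rightarrow> 'a rel) \<Rightarrow> bool" where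
  "consistent \<rho> \<longleftrightarrow> (\<forall>W W'. tournament W \<and> tournament W' \<and> \<rho> W \<noteq> \<rho> W' \<longrightarrow>
     (\<exists>x y. (x, y) \<in> W \<and> (y, x) \<in> W' \<and>
        (\<forall>W''. tournament W'' \<and> W \<inter> W' \<subseteq> W'' \<longrightarrow>
           ((x, y) \<in> \<rho> W'' \<longleftrightarrow> (x, y) \<in> W''))))"

end

(* A ranking R is W-feasible iff every covering pair of R (a pair with nothing
   ranked strictly between) is won in W: every covering pair of an outcome was offered, and
   conversely the chair can offer covering pairs of R for as long as any is unranked. Faithfulness
   says exactly this of \<rho> W, so feasible methods are faithful. Consistency of a feasible method
   is witnessed by the first pair on which the plays under two tournaments diverge. Conversely,
   faithfulness and consistency let the chair always offer an unranked pair on which \<rho> agrees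
   with every tournament compatible with the history: if \<rho> is constant on these tournaments a
   covering pair of that ranking works, otherwise consistency, applied to a tournament and its
   reversal off the history, yields one.
   Given feasibility, regret-freeness is efficiency. Efficiency puts every covering pair of a
   feasible ranking that is more aligned with the chair's preference into \<rho> W, so such a
   ranking is \<rho> W itself. If instead \<rho> W ranks y above x although the chair prefers x and x
   beats y, the strategy plays identically under the tournament W' obtained from \<rho> W by letting
   x beat y, so \<rho> W' = \<rho> W; yet moving the alternatives between y and x that the chair
   prefers to y in front of y gives a more aligned W'-feasible ranking. *)

theory Submission
  imports Defs "HOL-Library.Product_Lexorder"
begin

section \<open>Rankings and covering pairs\<close>

lemma ranking_irrefl: "ranking R \<Longrightarrow> (a, a) \<notin> R"
  by (auto simp: ranking_def proto_ranking_def irrefl_def)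

lemma ranking_trans: "ranking R \<Longrightarrow> trans R"
  by (simp add: ranking_def proto_ranking_def)

lemma ranking_total: "ranking R \<Longrightarrow> a \<noteq> b \<Longrightarrow> (b, a) \<notin> R \<Longrightarrow> (a, b) \<in> R"
  by (auto simp: ranking_def total_rel_def)

lemma ranking_iff_tournament_trans: "ranking R \<longleftrightarrow> tournament R \<and> trans R"
  using asym_on_iff_irrefl_on_if_trans_on[of UNIV R]
  by (auto simp: ranking_def proto_ranking_def tournament_def)

lemma ranking_imp_tournament: "ranking R \<Longrightarrow> tournament R"
  by (simp add: ranking_iff_tournament_trans)

lemma tournament_asym: "tournament W \<Longrightarrow> (a, b) \<in> W \<Longrightarrow> (b, a) \<notin> W"
  by (meson asymD tournament_def)

lemma tournament_irrefl: "tournament W \<Longrightarrow> (a, a) \<notin> W"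
  using tournament_asym by metis

lemma tournament_total: "tournament W \<Longrightarrow> a \<noteq> b \<Longrightarrow> (b, a) \<notin> W \<Longrightarrow> (a, b) \<in> W"
  by (auto simp: tournament_def total_rel_def)

lemma tournament_swap_mem_iff:
  "tournament W \<Longrightarrow> fst p \<noteq> snd p \<Longrightarrow> prod.swap p \<in> W \<longleftrightarrow> p \<notin> W"
  by (cases p) (auto dest: tournament_asym tournament_total)

lemma ranking_asym: "ranking R \<Longrightarrow> (a, b) \<in> R \<Longrightarrow> (b, a) \<notin> R"
  using ranking_imp_tournament tournament_asym by metis

lemma total_rel_subset_eq:
  assumes "total_rel S" "S \<subseteq> W" "tournament W"
  shows "S = W"
proof
  show "W \<subseteq> S"
  proof (rule subrelI)
    fix a b assume "(a, b) \<in> W"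
    then have "a \<noteq> b" "(b, a) \<notin> S"
      using assms(2) tournament_irrefl[OF assms(3)] tournament_asym[OF assms(3)] by auto
    then show "(a, b) \<in> S"
      using assms(1) unfolding total_rel_def by blast
  qed
qed (fact assms(2))

lemma tournament_reverse_pair:
  assumes "tournament W" "(x, y) \<in> W"
  shows "tournament (insert (y, x) (W - {(x, y)}))"
  using assms unfolding tournament_def total_rel_def asym_iff by blast

lemma ranking_of_key:
  fixes k :: "'a \<Rightarrow> 'b::linorder"
  assumes "inj k"
  shows "ranking {(a, b). k a < k b}"
  unfolding ranking_def proto_ranking_def total_rel_def
proof (intro conjI allI impI)
  show "irrefl {(a, b). k a < k b}"
    by (simp add: irrefl_def)
  show "trans {(a, b). k a < k b}"
    by (auto intro: transI)
  fix a b :: 'a assume "a \<noteq> b"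
  then have "k a \<noteq> k b" using assms by (simp add: inj_eq)
  then show "(a, b) \<in> {(a, b). k a < k b} \<or> (b, a) \<in> {(a, b). k a < k b}"
    by auto
qed

definition cover :: "'a rel \<Rightarrow> 'a rel" where
  "cover R = {(a, b). (a, b) \<in> R \<and> (\<nexists>c. (a, c) \<in> R \<and> (c, b) \<in> R)}"

lemma cover_subset: "cover R \<subseteq> R"
  by (auto simp: cover_def)

lemma cover_trancl_subset: "cover (S\<^sup>+) \<subseteq> S"
proof
  fix p assume "p \<in> cover (S\<^sup>+)"
  then obtain a b where p: "p = (a, b)" "(a, b) \<in> S\<^sup>+"
    and no_between: "\<nexists>c. (a, c) \<in> S\<^sup>+ \<and> (c, b) \<in> S\<^sup>+"
    by (auto simp: cover_def)
  from \<open>(a, b) \<in> S\<^sup>+\<close> show "p \<in> S"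
    by (cases rule: converse_tranclE) (use p no_between in auto)
qed

lemma trancl_cover:
  assumes "finite R" "trans R" "irrefl R"
  shows "(cover R)\<^sup>+ = R"
proof
  show "(cover R)\<^sup>+ \<subseteq> R"
    using trancl_mono[OF _ cover_subset] trancl_id[OF \<open>trans R\<close>] by blast
  define between where "between a b = {c. (a, c) \<in> R \<and> (c, b) \<in> R}" for a b
  have "(a, b) \<in> (cover R)\<^sup>+" if "(a, b) \<in> R" "card (between a b) = n" for n a b
    using that
  proof (induction n arbitrary: a b rule: less_induct)
    case (less n)
    show ?case
    proof (cases "between a b = {}")
      case True
      then show ?thesis using less.prems by (auto simp: cover_def between_def)
    next
      case False
      then obtain c where ac: "(a, c) \<in> R" and cb: "(c, b) \<in> R"
        by (auto simp: between_def)
      have fin: "finite (between a b)"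
        using \<open>finite R\<close> by (auto simp: between_def intro: finite_subset[OF _ finite_Range])
      have "between a c \<subset> between a b" "between c b \<subset> between a b"
        using ac cb \<open>trans R\<close> \<open>irrefl R\<close> by (auto simp: between_def irrefl_def dest: transD)
      then have "card (between a c) < n" "card (between c b) < n"
        using psubset_card_mono[OF fin] less.prems(2) by auto
      then show ?thesis
        using less.IH[OF _ ac refl] less.IH[OF _ cb refl] by (meson trancl_trans)
    qed
  qed
  then show "R \<subseteq> (cover R)\<^sup>+" by fast
qed

lemma subset_if_cover_subset:
  fixes R :: "'a::finite rel"
  assumes "ranking R" "cover R \<subseteq> S" "trans S"
  shows "R \<subseteq> S"
proof -
  have "R = (cover R)\<^sup>+"
    using trancl_cover[of R] assms(1) by (simp add: ranking_def proto_ranking_def)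
  also have "\<dots> \<subseteq> S\<^sup>+"
    using assms(2) by (rule trancl_mono_subset)
  also have "\<dots> = S"
    using assms(3) by simp
  finally show ?thesis .
qed

lemma ranking_reverse_cover_pair:
  assumes R: "ranking R" and uv: "(u, v) \<in> cover R"
  shows "ranking (insert (v, u) (R - {(u, v)}))" (is "ranking ?R'")
proof -
  have uvR: "(u, v) \<in> R" and no_between: "\<And>c. (u, c) \<in> R \<Longrightarrow> (c, v) \<in> R \<Longrightarrow> False"
    using uv by (auto simp: cover_def)
  have "u \<noteq> v"
    using uvR ranking_irrefl[OF R] by metis
  have "trans ?R'"
  proof (rule transI)
    fix a b c assume ab: "(a, b) \<in> ?R'" and bc: "(b, c) \<in> ?R'"
    consider "a = v" "b = u" "(u, c) \<in> R" "c \<noteq> v" | "b = v" "c = u" "(a, v) \<in> R" "a \<noteq> u"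
      | "(a, b) \<in> R" "(b, c) \<in> R"
      using ab bc \<open>u \<noteq> v\<close> by auto
    then show "(a, c) \<in> ?R'"
    proof cases
      case 1
      then have "(v, c) \<in> R" using no_between ranking_total[OF R] by metis
      then show ?thesis using 1 by auto
    next
      case 2
      then have "(a, u) \<in> R" using no_between ranking_total[OF R] by metis
      then show ?thesis using 2 by auto
    next
      case 3
      then have "(a, c) \<in> R" "(a, c) \<noteq> (u, v)"
        using no_between ranking_trans[OF R] by (auto dest: transD)
      then show ?thesis by simp
    qed
  qed
  moreover have "tournament ?R'"
    using tournament_reverse_pair[OF ranking_imp_tournament[OF R] uvR] .
  ultimately show ?thesis
    by (simp add: ranking_iff_tournament_trans)
qed

text \<open>Reversing a covering pair of \<open>R\<close> that is not in \<open>W\<close> gives a ranking more aligned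
  with \<open>W\<close>.\<close>
lemma aligned_unimprovable_iff_cover_subset:
  fixes R :: "'a::finite rel"
  assumes R: "ranking R"
  shows "(\<forall>R'. ranking R' \<and> R' \<noteq> R \<longrightarrow> \<not> more_aligned W R' R) \<longleftrightarrow> cover R \<subseteq> W"
proof
  assume unimprovable: "\<forall>R'. ranking R' \<and> R' \<noteq> R \<longrightarrow> \<not> more_aligned W R' R"
  show "cover R \<subseteq> W"
  proof (rule subrelI, rule ccontr)
    fix u v assume uv: "(u, v) \<in> cover R" and "(u, v) \<notin> W"
    let ?R' = "insert (v, u) (R - {(u, v)})"
    have "(v, u) \<notin> R"
      using uv cover_subset ranking_asym[OF R] by blast
    then have "?R' \<noteq> R" by blast
    moreover have "more_aligned W ?R' R"
      using \<open>(u, v) \<notin> W\<close> by (auto simp: more_aligned_def)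
    ultimately show False
      using unimprovable ranking_reverse_cover_pair[OF R uv] by blast
  qed
next
  assume cover_W: "cover R \<subseteq> W"
  show "\<forall>R'. ranking R' \<and> R' \<noteq> R \<longrightarrow> \<not> more_aligned W R' R"
  proof (intro allI impI notI)
    fix R' assume R': "ranking R' \<and> R' \<noteq> R" and "more_aligned W R' R"
    then have "cover R \<subseteq> R'"
      using cover_W cover_subset by (fastforce simp: more_aligned_def)
    then have "R \<subseteq> R'"
      using subset_if_cover_subset[OF R] ranking_trans R' by blast
    then show False
      using total_rel_subset_eq[of R R'] R R' ranking_imp_tournament
      by (auto simp: ranking_def)
  qed
qed

section \<open>Plays\<close>

definition history :: "(('a \<times> 'a) list \<Rightarrow> 'a \<times> 'a) \<Rightarrow> 'a rel \<Rightarrow> nat \<Rightarrow> ('a \<times> 'a) list" where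
  "history \<sigma> W t = (step \<sigma> W ^^ t) []"

lemma history_0 [simp]: "history \<sigma> W 0 = []"
  by (simp add: history_def)

lemma history_Suc_terminal:
  "total_rel (hist_rel (history \<sigma> W t)) \<Longrightarrow> history \<sigma> W (Suc t) = history \<sigma> W t"
  by (simp add: history_def step_def)

lemma history_Suc_nonterminal:
  "\<not> total_rel (hist_rel (history \<sigma> W t)) \<Longrightarrow>
    history \<sigma> W (Suc t) = history \<sigma> W t @ [winner_loser W (\<sigma> (history \<sigma> W t))]"
  by (simp add: history_def step_def)

lemma outcome_eq_hist_rel_history:
  "outcome \<sigma> (W :: 'a::finite rel) = hist_rel (history \<sigma> W (card (UNIV :: 'a set) ^ 2))"
  by (simp add: outcome_def history_def)

lemma set_subset_hist_rel: "set h \<subseteq> hist_rel h"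
  by (auto simp: hist_rel_def)

lemma hist_rel_mono: "set h \<subseteq> set h' \<Longrightarrow> hist_rel h \<subseteq> hist_rel h'"
  unfolding hist_rel_def by (rule trancl_mono_subset)

lemma set_history_mono: "t \<le> t' \<Longrightarrow> set (history \<sigma> W t) \<subseteq> set (history \<sigma> W t')"
  by (rule lift_Suc_mono_le[where f = "\<lambda>t. set (history \<sigma> W t)"])
    (auto simp: history_def step_def)

lemma winner_loser_cases: "winner_loser W p = p \<or> winner_loser W p = prod.swap p"
  by (cases p) (simp add: winner_loser_def)

lemma winner_loser_mem: "tournament W \<Longrightarrow> fst p \<noteq> snd p \<Longrightarrow> winner_loser W p \<in> W"
  by (cases p) (auto simp: winner_loser_def dest: tournament_total)

lemma winner_loser_eq:
  "tournament W' \<Longrightarrow> winner_loser W p \<in> W' \<Longrightarrow> winner_loser W' p = winner_loser W p"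
  by (cases p) (auto simp: winner_loser_def dest: tournament_asym)

lemma winner_loser_mem_iff:
  assumes "tournament W" "tournament R" "fst p \<noteq> snd p"
  shows "winner_loser W p \<in> R \<longleftrightarrow> (p \<in> R \<longleftrightarrow> p \<in> W)"
  using tournament_swap_mem_iff[OF assms(2,3)] tournament_swap_mem_iff[OF assms(1,3)]
  by (auto simp: winner_loser_def prod.swap_def)

lemma unranked_winner_loser: "unranked R p \<Longrightarrow> winner_loser W p \<notin> R"
  using winner_loser_cases[of W p] by (cases p) (auto simp: unranked_def)

lemma set_history_subset:
  assumes "strategy \<sigma>" "tournament W"
  shows "set (history \<sigma> W t) \<subseteq> W"
proof (induction t)
  case (Suc t)
  show ?case
  proof (cases "total_rel (hist_rel (history \<sigma> W t))")
    case False
    then have "fst (\<sigma> (history \<sigma> W t)) \<noteq> snd (\<sigma> (history \<sigma> W t))"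
      using assms(1) by (simp add: strategy_def unranked_def)
    then show ?thesis
      using Suc winner_loser_mem[OF assms(2)] False by (simp add: history_Suc_nonterminal)
  qed (use Suc in \<open>simp add: history_Suc_terminal\<close>)
qed simp

lemma history_eq_if_subset:
  assumes "tournament W'"
  shows "set (history \<sigma> W t) \<subseteq> W' \<Longrightarrow> history \<sigma> W' t = history \<sigma> W t"
proof (induction t)
  case (Suc t)
  then have IH: "history \<sigma> W' t = history \<sigma> W t"
    using set_history_mono[of t "Suc t" \<sigma> W] by simp
  show ?case
  proof (cases "total_rel (hist_rel (history \<sigma> W t))")
    case False
    then have "winner_loser W (\<sigma> (history \<sigma> W t)) \<in> W'"
      using Suc.prems by (simp add: history_Suc_nonterminal)
    then show ?thesis
      using IH False winner_loser_eq[OF assms] by (simp add: history_Suc_nonterminal)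
  qed (simp add: IH history_Suc_terminal)
qed simp

lemma total_or_card_hist_rel_history:
  assumes "strategy \<sigma>"
  shows "total_rel (hist_rel (history \<sigma> W t)) \<or> t \<le> card (hist_rel (history \<sigma> (W :: 'a::finite rel) t))"
proof (induction t)
  case (Suc t)
  let ?h = "history \<sigma> W t" and ?q = "winner_loser W (\<sigma> (history \<sigma> W t))"
  show ?case
  proof (cases "total_rel (hist_rel ?h)")
    case False
    have "?q \<notin> hist_rel ?h"
      using assms False by (simp add: strategy_def unranked_winner_loser)
    moreover have "?q \<in> hist_rel (?h @ [?q])" "hist_rel ?h \<subseteq> hist_rel (?h @ [?q])"
      using set_subset_hist_rel[of "?h @ [?q]"] hist_rel_mono[of ?h "?h @ [?q]"] by auto
    ultimately have "card (hist_rel ?h) < card (hist_rel (?h @ [?q]))"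
      by (intro psubset_card_mono) auto
    then show ?thesis
      using Suc False by (simp add: history_Suc_nonterminal)
  qed (simp add: history_Suc_terminal)
qed simp

lemma total_rel_outcome:
  fixes W :: "'a::finite rel"
  assumes "strategy \<sigma>"
  shows "total_rel (outcome \<sigma> W)"
proof (rule ccontr)
  assume not_total: "\<not> total_rel (outcome \<sigma> W)"
  then have "outcome \<sigma> W \<noteq> UNIV"
    by (auto simp: total_rel_def)
  then have "card (outcome \<sigma> W) < card (UNIV :: ('a \<times> 'a) set)"
    by (intro psubset_card_mono) auto
  also have "\<dots> = card (UNIV :: 'a set) ^ 2"
    by (simp flip: UNIV_Times_UNIV add: card_cartesian_product power2_eq_square)
  finally show False
    using total_or_card_hist_rel_history[OF assms, of W "card (UNIV :: 'a set) ^ 2"] not_total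
    by (simp add: outcome_eq_hist_rel_history)
qed

lemma hist_rel_history_subset_outcome:
  "t \<le> card (UNIV :: 'a set) ^ 2 \<Longrightarrow> hist_rel (history \<sigma> W t) \<subseteq> outcome \<sigma> (W :: 'a::finite rel)"
  unfolding outcome_eq_hist_rel_history by (intro hist_rel_mono set_history_mono)

lemma cover_outcome_subset:
  "strategy \<sigma> \<Longrightarrow> tournament W \<Longrightarrow> cover (outcome \<sigma> W) \<subseteq> W"
  unfolding outcome_eq_hist_rel_history hist_rel_def
  using cover_trancl_subset set_history_subset by blast

lemma outcome_eq_if_subset:
  "strategy \<sigma> \<Longrightarrow> ranking R \<Longrightarrow> outcome \<sigma> W \<subseteq> R \<Longrightarrow> outcome \<sigma> W = R"
  using total_rel_subset_eq total_rel_outcome ranking_imp_tournament by blast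

lemma hist_rel_history_Suc_subset:
  assumes "hist_rel (history \<sigma> W t) \<subseteq> R" "trans R"
    and "\<not> total_rel (hist_rel (history \<sigma> W t)) \<Longrightarrow> winner_loser W (\<sigma> (history \<sigma> W t)) \<in> R"
  shows "hist_rel (history \<sigma> W (Suc t)) \<subseteq> R"
proof (cases "total_rel (hist_rel (history \<sigma> W t))")
  case False
  let ?h = "history \<sigma> W t"
  have "insert (winner_loser W (\<sigma> ?h)) (set ?h) \<subseteq> R"
    using assms False set_subset_hist_rel[of ?h] by auto
  then have "(insert (winner_loser W (\<sigma> ?h)) (set ?h))\<^sup>+ \<subseteq> R"
    using trancl_mono_subset[of _ R] trancl_id[OF \<open>trans R\<close>] by blast
  then show ?thesis
    using False by (simp add: history_Suc_nonterminal hist_rel_def)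
qed (use assms in \<open>simp add: history_Suc_terminal\<close>)

lemma outcome_eqI:
  fixes W :: "'a::finite rel"
  assumes "strategy \<sigma>" "ranking R"
    and "\<And>t. hist_rel (history \<sigma> W t) \<subseteq> R \<Longrightarrow> \<not> total_rel (hist_rel (history \<sigma> W t)) \<Longrightarrow>
      winner_loser W (\<sigma> (history \<sigma> W t)) \<in> R"
  shows "outcome \<sigma> W = R"
proof -
  have "hist_rel (history \<sigma> W t) \<subseteq> R" for t
  proof (induction t)
    case (Suc t)
    show ?case
      by (rule hist_rel_history_Suc_subset[OF Suc ranking_trans[OF assms(2)] assms(3)[OF Suc]])
  qed (simp add: hist_rel_def)
  then show ?thesis
    using outcome_eq_if_subset[OF assms(1,2)] by (simp add: outcome_eq_hist_rel_history)
qed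

section \<open>Feasibility and faithfulness\<close>

definition preferring_strategy ::
  "(('a \<times> 'a) list \<Rightarrow> 'a \<times> 'a \<Rightarrow> bool) \<Rightarrow> ('a \<times> 'a) list \<Rightarrow> 'a \<times> 'a" where
  "preferring_strategy Q h =
     (SOME p. unranked (hist_rel h) p \<and> (Q h p \<or> (\<nexists>q. unranked (hist_rel h) q \<and> Q h q)))"

lemma strategy_preferring_strategy: "strategy (preferring_strategy Q)"
  unfolding strategy_def preferring_strategy_def
proof (intro allI impI)
  fix h :: "('a \<times> 'a) list" assume "\<not> total_rel (hist_rel h)"
  then have "\<exists>p. unranked (hist_rel h) p"
    by (auto simp: total_rel_def unranked_def)
  then have "\<exists>p. unranked (hist_rel h) p \<and> (Q h p \<or> (\<nexists>q. unranked (hist_rel h) q \<and> Q h q))"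
    by blast
  then show "unranked (hist_rel h)
      (SOME p. unranked (hist_rel h) p \<and> (Q h p \<or> (\<nexists>q. unranked (hist_rel h) q \<and> Q h q)))"
    by (rule someI2_ex) blast
qed

lemma preferring_strategy_prefers:
  assumes "unranked (hist_rel h) p" "Q h p"
  shows "unranked (hist_rel h) (preferring_strategy Q h) \<and> Q h (preferring_strategy Q h)"
  unfolding preferring_strategy_def by (rule someI2[of _ p]) (use assms in blast)+

lemma exists_cover_unranked:
  fixes R :: "'a::finite rel"
  assumes R: "ranking R" and "S \<subseteq> R" "trans S" "\<not> total_rel S"
  shows "\<exists>p \<in> cover R. unranked S p"
proof (rule ccontr)
  assume "\<not> (\<exists>p \<in> cover R. unranked S p)"
  then have "cover R \<subseteq> S"
    using \<open>S \<subseteq> R\<close> cover_subset ranking_irrefl[OF R] ranking_asym[OF R]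
    by (fastforce simp: unranked_def)
  then have "S = R"
    using subset_if_cover_subset[OF R] assms(2,3) by blast
  then show False
    using assms(4) R by (simp add: ranking_def)
qed

lemma W_feasible_iff_cover_subset:
  fixes W :: "'a::finite rel"
  assumes W: "tournament W"
  shows "W_feasible W R \<longleftrightarrow> ranking R \<and> cover R \<subseteq> W"
proof
  assume "W_feasible W R"
  then show "ranking R \<and> cover R \<subseteq> W"
    using cover_outcome_subset W by (auto simp: W_feasible_def)
next
  assume R: "ranking R \<and> cover R \<subseteq> W"
  let ?\<sigma> = "preferring_strategy (\<lambda>h p. p \<in> cover R)"
  have "outcome ?\<sigma> W = R"
  proof (rule outcome_eqI[OF strategy_preferring_strategy])
    fix t
    let ?h = "history ?\<sigma> W t"
    assume "hist_rel ?h \<subseteq> R" "\<not> total_rel (hist_rel ?h)"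
    then obtain p where "p \<in> cover R" "unranked (hist_rel ?h) p"
      using exists_cover_unranked R by (metis hist_rel_def trans_trancl)
    then have "?\<sigma> ?h \<in> cover R" "fst (?\<sigma> ?h) \<noteq> snd (?\<sigma> ?h)"
      using preferring_strategy_prefers[where Q = "\<lambda>h p. p \<in> cover R"] by (auto simp: unranked_def)
    then show "winner_loser W (?\<sigma> ?h) \<in> R"
      using R cover_subset winner_loser_mem_iff[OF W ranking_imp_tournament] by blast
  qed (use R in simp)
  then show "W_feasible W R"
    using R strategy_preferring_strategy by (auto simp: W_feasible_def)
qed

lemma ranking_method_ranking: "ranking_method \<rho> \<Longrightarrow> tournament W \<Longrightarrow> ranking (\<rho> W)"
  by (simp add: ranking_method_def)

lemma faithful_iff_cover_subset:
  fixes \<rho> :: "'a::finite rel \<Rightarrow> 'a rel"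
  assumes "ranking_method \<rho>"
  shows "faithful \<rho> \<longleftrightarrow> (\<forall>W. tournament W \<longrightarrow> cover (\<rho> W) \<subseteq> W)"
  unfolding faithful_def
  using aligned_unimprovable_iff_cover_subset[OF ranking_method_ranking[OF assms]] by blast

lemma feasible_imp_faithful:
  fixes \<rho> :: "'a::finite rel \<Rightarrow> 'a rel"
  assumes "ranking_method \<rho>" "feasible_method \<rho>"
  shows "faithful \<rho>"
proof -
  obtain \<sigma> where "strategy \<sigma>" and "\<And>W. tournament W \<Longrightarrow> outcome \<sigma> W = \<rho> W"
    using assms(2) by (auto simp: feasible_method_def)
  then show ?thesis
    using cover_outcome_subset by (metis faithful_iff_cover_subset[OF assms(1)])
qed

section \<open>Efficiency and regret\<close>

definition position :: "'a rel \<Rightarrow> 'a \<Rightarrow> nat" where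
  "position R z = card {w. (w, z) \<in> R}"

lemma position_less_iff:
  fixes R :: "'a::finite rel"
  assumes R: "ranking R"
  shows "position R a < position R b \<longleftrightarrow> (a, b) \<in> R"
proof -
  have less: "position R c < position R d" if "(c, d) \<in> R" for c d
  proof -
    have "{w. (w, c) \<in> R} \<subset> {w. (w, d) \<in> R}"
      using that ranking_trans[OF R] ranking_irrefl[OF R] by (auto dest: transD)
    then show ?thesis
      unfolding position_def by (simp add: psubset_card_mono)
  qed
  show ?thesis
    using less[of a b] less[of b a] ranking_total[OF R, of a b] by fastforce
qed

lemma inj_position:
  fixes R :: "'a::finite rel"
  assumes "ranking R"
  shows "inj (position R)"
  by (rule injI) (metis assms position_less_iff ranking_total less_irrefl)

text \<open>\<open>promoted\<close> moves the alternatives of the segment of \<open>R\<close> from \<open>y\<close> to \<open>x\<close> that \<open>P\<close>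
  ranks above \<open>y\<close> to just before \<open>y\<close>, keeping the order of \<open>R\<close> otherwise.\<close>
locale promotion =
  fixes R P :: "'a::finite rel" and x y :: 'a
  assumes R: "ranking R" and P: "ranking P" and yx: "(y, x) \<in> R" and xy: "(x, y) \<in> P"
begin

abbreviation p :: "'a \<Rightarrow> nat" where
  "p \<equiv> position R"

definition block :: "'a \<Rightarrow> bool" where
  "block z \<longleftrightarrow> p y \<le> p z \<and> p z \<le> p x"

definition up :: "'a \<Rightarrow> bool" where
  "up z \<longleftrightarrow> block z \<and> (z, y) \<in> P"

definition level :: "'a \<Rightarrow> nat" where
  "level z = (if up z then p y else if block z then p x else p z)"

definition promoted :: "'a rel" where
  "promoted = {(a, b). (level a, p a) < (level b, p b)}"

lemma p_less_iff: "p a < p b \<longleftrightarrow> (a, b) \<in> R"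
  by (rule position_less_iff[OF R])

lemma p_eq_iff: "p a = p b \<longleftrightarrow> a = b"
  using inj_position[OF R] by (auto simp: inj_def)

lemma p_y_less_p_x: "p y < p x"
  using yx p_less_iff by blast

lemma up_x: "up x" and not_up_y: "\<not> up y" and block_y: "block y"
  using xy p_y_less_p_x ranking_irrefl[OF P] by (auto simp: up_def block_def)

lemma promoted_iff: "(a, b) \<in> promoted \<longleftrightarrow> level a < level b \<or> level a = level b \<and> p a < p b"
  by (auto simp: promoted_def)

lemma ranking_promoted: "ranking promoted"
  unfolding promoted_def using p_eq_iff by (intro ranking_of_key injI) auto

lemma promoted_inversion: "(a, b) \<in> R \<Longrightarrow> (b, a) \<in> promoted \<Longrightarrow> up b \<and> block a \<and> \<not> up a"
  by (auto simp: p_less_iff[symmetric] promoted_iff level_def up_def block_def split: if_splits)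

lemma xy_promoted: "(x, y) \<in> promoted"
  using up_x not_up_y block_y p_y_less_p_x by (simp add: promoted_iff level_def)

lemma promoted_neq: "promoted \<noteq> R"
  using xy_promoted yx ranking_asym[OF R] by blast

lemma more_aligned_promoted: "more_aligned P promoted R"
  unfolding more_aligned_def
proof (intro allI impI)
  fix a b assume abP: "(a, b) \<in> P" and abR: "(a, b) \<in> R"
  show "(a, b) \<in> promoted"
  proof (rule ccontr)
    assume "(a, b) \<notin> promoted"
    then have "(b, a) \<in> promoted"
      using abR ranking_irrefl[OF R] ranking_total[OF ranking_promoted] by metis
    then have "(b, y) \<in> P" "a = y \<or> (y, a) \<in> P"
      using promoted_inversion[OF abR] ranking_total[OF P] by (auto simp: up_def)
    then have "(b, a) \<in> P"
      using ranking_trans[OF P] by (auto dest: transD)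
    then show False
      using abP ranking_asym[OF P] by blast
  qed
qed

lemma cover_promoted_subset: "cover promoted \<subseteq> insert (x, y) (R - {(y, x)})"
proof (rule subrelI)
  fix a b assume "(a, b) \<in> cover promoted"
  then have ab: "(a, b) \<in> promoted"
    and no_between: "\<And>c. (a, c) \<in> promoted \<Longrightarrow> (c, b) \<in> promoted \<Longrightarrow> False"
    by (auto simp: cover_def)
  show "(a, b) \<in> insert (x, y) (R - {(y, x)})"
  proof (cases "(a, b) \<in> R")
    case True
    then show ?thesis
      using ab xy_promoted ranking_asym[OF ranking_promoted] by auto
  next
    case False
    then have "(b, a) \<in> R"
      using ab ranking_irrefl[OF ranking_promoted] ranking_total[OF R] by metis
    then have "up a" "block a" "block b" "\<not> up b"
      using promoted_inversion ab by (auto simp: up_def)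
    have "a = x"
    proof (rule ccontr)
      assume "a \<noteq> x"
      then have "(a, x) \<in> promoted" "(x, b) \<in> promoted"
        using \<open>up a\<close> \<open>block a\<close> \<open>block b\<close> \<open>\<not> up b\<close> up_x p_y_less_p_x p_eq_iff[of a x]
        by (auto simp: promoted_iff level_def block_def)
      then show False
        using no_between by blast
    qed
    moreover have "b = y"
    proof (rule ccontr)
      assume "b \<noteq> y"
      then have "(a, y) \<in> promoted" "(y, b) \<in> promoted"
        using \<open>up a\<close> \<open>block b\<close> \<open>\<not> up b\<close> not_up_y block_y p_y_less_p_x p_eq_iff[of b y]
        by (auto simp: promoted_iff level_def block_def)
      then show False
        using no_between by blast
    qed
    ultimately show ?thesis
      by simp
  qed
qed

end

lemma efficient_imp_regret_free:
  fixes \<rho> :: "'a::finite rel \<Rightarrow> 'a rel"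
  assumes P: "ranking P" and rm: "ranking_method \<rho>" and ef: "efficient_method P \<rho>"
  shows "regret_free P \<rho>"
  unfolding regret_free_def W_unimprovable_def
proof (intro allI impI conjI notI)
  fix W :: "'a rel" and R' assume W: "tournament W"
  show R: "ranking (\<rho> W)"
    using rm W by (rule ranking_method_ranking)
  assume "W_feasible W R' \<and> R' \<noteq> \<rho> W" and aligned: "more_aligned P R' (\<rho> W)"
  then have R': "ranking R'" "cover R' \<subseteq> W" and "R' \<noteq> \<rho> W"
    using W_feasible_iff_cover_subset[OF W] by auto
  have "cover R' \<subseteq> \<rho> W"
  proof (rule subrelI, rule ccontr)
    fix u v assume uv: "(u, v) \<in> cover R'" "(u, v) \<notin> \<rho> W"
    then have "(u, v) \<in> W" "(u, v) \<in> R'"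
      using R' cover_subset by blast+
    then have "(v, u) \<in> \<rho> W" "u \<noteq> v"
      using uv(2) tournament_irrefl[OF W] ranking_total[OF R] by metis+
    show False
    proof (cases "(u, v) \<in> P")
      case True
      then show False
        using ef W \<open>(u, v) \<in> W\<close> uv(2) by (auto simp: efficient_method_def W_efficient_def)
    next
      case False
      then have "(v, u) \<in> R'"
        using aligned \<open>(v, u) \<in> \<rho> W\<close> \<open>u \<noteq> v\<close> ranking_total[OF P]
        by (auto simp: more_aligned_def)
      then show False
        using \<open>(u, v) \<in> R'\<close> ranking_asym[OF R'(1)] by blast
    qed
  qed
  then have "R' \<subseteq> \<rho> W"
    using subset_if_cover_subset R' ranking_trans[OF R] by blast
  then show False
    using total_rel_subset_eq[of R' "\<rho> W"] R' R \<open>R' \<noteq> \<rho> W\<close> ranking_imp_tournament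
    by (auto simp: ranking_def)
qed

lemma feasible_regret_free_imp_efficient:
  fixes \<rho> :: "'a::finite rel \<Rightarrow> 'a rel"
  assumes P: "ranking P" and rm: "ranking_method \<rho>" and fe: "feasible_method \<rho>"
    and rf: "regret_free P \<rho>"
  shows "efficient_method P \<rho>"
  unfolding efficient_method_def W_efficient_def
proof (intro allI impI)
  fix W :: "'a rel" and x y
  assume W: "tournament W" and xyP: "(x, y) \<in> P" and xyW: "(x, y) \<in> W"
  obtain \<sigma> where \<sigma>: "strategy \<sigma>" and outcome: "\<And>W. tournament W \<Longrightarrow> outcome \<sigma> W = \<rho> W"
    using fe by (auto simp: feasible_method_def)
  define h where "h = history \<sigma> W (card (UNIV :: 'a set) ^ 2)"
  define R where "R = \<rho> W"
  have R: "ranking R" and R_h: "R = hist_rel h"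
    using rm W outcome[OF W] by (auto simp: R_def h_def ranking_method_def outcome_eq_hist_rel_history)
  show "(x, y) \<in> \<rho> W"
  proof (rule ccontr)
    assume "(x, y) \<notin> \<rho> W"
    then have yx: "(y, x) \<in> R"
      using xyW tournament_irrefl[OF W] ranking_total[OF R] by (metis R_def)
    define W' where "W' = insert (x, y) (R - {(y, x)})"
    have W': "tournament W'"
      unfolding W'_def by (rule tournament_reverse_pair[OF ranking_imp_tournament[OF R] yx])
    have "set h \<subseteq> W'"
      using set_history_subset[OF \<sigma> W] set_subset_hist_rel[of h] R_h tournament_asym[OF W xyW]
      by (auto simp: W'_def h_def)
    then have "\<rho> W' = R"
      using history_eq_if_subset[OF W'] outcome[OF W'] R_h
      by (simp add: h_def outcome_eq_hist_rel_history)
    then have unimprovable: "W_unimprovable P W' R"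
      using rf W' by (auto simp: regret_free_def)
    interpret promotion R P x y
      using R P yx xyP by unfold_locales
    have "W_feasible W' promoted"
      using W_feasible_iff_cover_subset[OF W'] ranking_promoted cover_promoted_subset
      by (simp add: W'_def)
    then show False
      using unimprovable promoted_neq more_aligned_promoted by (auto simp: W_unimprovable_def)
  qed
qed

section \<open>Consistency\<close>

definition follows_tournament :: "('a rel \<Rightarrow> 'a rel) \<Rightarrow> 'a rel \<Rightarrow> 'a \<times> 'a \<Rightarrow> bool" where
  "follows_tournament \<rho> S p \<longleftrightarrow> (\<forall>W. tournament W \<and> S \<subseteq> W \<longrightarrow> (p \<in> \<rho> W \<longleftrightarrow> p \<in> W))"

lemma follows_tournament_mono:
  "follows_tournament \<rho> S p \<Longrightarrow> S \<subseteq> S' \<Longrightarrow> follows_tournament \<rho> S' p"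
  unfolding follows_tournament_def by blast

lemma follows_tournament_swap:
  assumes "ranking_method \<rho>" "fst p \<noteq> snd p" "follows_tournament \<rho> S p"
  shows "follows_tournament \<rho> S (prod.swap p)"
  unfolding follows_tournament_def
proof (intro allI impI)
  fix W assume W: "tournament W \<and> S \<subseteq> W"
  then have "p \<in> \<rho> W \<longleftrightarrow> p \<in> W"
    using assms(3) by (simp add: follows_tournament_def)
  then show "prod.swap p \<in> \<rho> W \<longleftrightarrow> prod.swap p \<in> W"
    using W tournament_swap_mem_iff[OF _ assms(2)]
      ranking_imp_tournament[OF ranking_method_ranking[OF assms(1)]] by simp
qed

lemma consistentI:
  assumes "\<And>W W'. tournament W \<Longrightarrow> tournament W' \<Longrightarrow> \<rho> W \<noteq> \<rho> W' \<Longrightarrow>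
    \<exists>x y. (x, y) \<in> W \<and> (y, x) \<in> W' \<and> follows_tournament \<rho> (W \<inter> W') (x, y)"
  shows "consistent \<rho>"
  using assms by (simp add: consistent_def follows_tournament_def)

lemma consistentE:
  assumes "consistent \<rho>" "tournament W" "tournament W'" "\<rho> W \<noteq> \<rho> W'"
  obtains x y where "(x, y) \<in> W" "(y, x) \<in> W'" "follows_tournament \<rho> (W \<inter> W') (x, y)"
  using assms unfolding consistent_def follows_tournament_def by blast

lemma exists_first_difference:
  "f 0 = g 0 \<Longrightarrow> f n \<noteq> g n \<Longrightarrow> \<exists>t < n. f t = g t \<and> f (Suc t) \<noteq> g (Suc t)"
  by (induction n) (auto intro: less_SucI)

lemma follows_tournament_offered_pair:
  fixes \<rho> :: "'a::finite rel \<Rightarrow> 'a rel"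
  assumes rm: "ranking_method \<rho>" and \<sigma>: "strategy \<sigma>"
    and outcome: "\<And>W. tournament W \<Longrightarrow> outcome \<sigma> W = \<rho> W"
    and "t < card (UNIV :: 'a set) ^ 2" and not_total: "\<not> total_rel (hist_rel (history \<sigma> W t))"
  shows "follows_tournament \<rho> (set (history \<sigma> W t)) (\<sigma> (history \<sigma> W t))"
  unfolding follows_tournament_def
proof (intro allI impI)
  let ?h = "history \<sigma> W t" and ?q = "\<sigma> (history \<sigma> W t)"
  fix W'' assume "tournament W'' \<and> set ?h \<subseteq> W''"
  then have W'': "tournament W''" and "history \<sigma> W'' t = ?h"
    using history_eq_if_subset by auto
  then have "winner_loser W'' ?q \<in> set (history \<sigma> W'' (Suc t))"
    using not_total by (simp add: history_Suc_nonterminal)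
  then have "winner_loser W'' ?q \<in> \<rho> W''"
    using hist_rel_history_subset_outcome[of "Suc t" \<sigma> W''] assms(4) outcome[OF W'']
      set_subset_hist_rel by fastforce
  moreover have "fst ?q \<noteq> snd ?q"
    using \<sigma> not_total by (simp add: strategy_def unranked_def)
  ultimately show "?q \<in> \<rho> W'' \<longleftrightarrow> ?q \<in> W''"
    using winner_loser_mem_iff[OF W'' ranking_imp_tournament[OF ranking_method_ranking[OF rm W'']]]
    by blast
qed

lemma feasible_imp_consistent:
  fixes \<rho> :: "'a::finite rel \<Rightarrow> 'a rel"
  assumes rm: "ranking_method \<rho>" and fe: "feasible_method \<rho>"
  shows "consistent \<rho>"
proof (rule consistentI)
  fix W W' :: "'a rel" assume W: "tournament W" and W': "tournament W'" and "\<rho> W \<noteq> \<rho> W'"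
  obtain \<sigma> where \<sigma>: "strategy \<sigma>" and outcome: "\<And>W. tournament W \<Longrightarrow> outcome \<sigma> W = \<rho> W"
    using fe by (auto simp: feasible_method_def)
  let ?N = "card (UNIV :: 'a set) ^ 2"
  have "history \<sigma> W ?N \<noteq> history \<sigma> W' ?N"
    using \<open>\<rho> W \<noteq> \<rho> W'\<close> outcome[OF W] outcome[OF W'] by (auto simp: outcome_eq_hist_rel_history)
  then obtain t where "t < ?N" and same: "history \<sigma> W t = history \<sigma> W' t"
    and diverge: "history \<sigma> W (Suc t) \<noteq> history \<sigma> W' (Suc t)"
    using exists_first_difference[of "history \<sigma> W" "history \<sigma> W'"] by auto
  define h where "h = history \<sigma> W t"
  define q where "q = \<sigma> h"
  have not_total: "\<not> total_rel (hist_rel h)"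
    using same diverge by (auto simp: h_def history_Suc_terminal)
  then have "fst q \<noteq> snd q"
    using \<sigma> by (simp add: q_def strategy_def unranked_def)
  have "winner_loser W q \<noteq> winner_loser W' q"
    using diverge same not_total by (simp add: h_def q_def history_Suc_nonterminal)
  then obtain x y where xy: "winner_loser W q = (x, y)" and yx: "winner_loser W' q = (y, x)"
    using winner_loser_cases[of W q] winner_loser_cases[of W' q] by (cases q) auto
  have "set h \<subseteq> W"
    using set_history_subset[OF \<sigma> W] by (simp add: h_def)
  moreover have "set h \<subseteq> W'"
    using set_history_subset[OF \<sigma> W'] by (simp add: h_def same)
  moreover have "follows_tournament \<rho> (set h) (x, y)"
  proof -
    have "follows_tournament \<rho> (set h) q"
      using follows_tournament_offered_pair[OF rm \<sigma> outcome \<open>t < ?N\<close>] not_total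
      by (simp add: h_def q_def)
    moreover have "(x, y) = q \<or> (x, y) = prod.swap q"
      using xy winner_loser_cases[of W q] by auto
    ultimately show ?thesis
      using follows_tournament_swap[OF rm \<open>fst q \<noteq> snd q\<close>] by auto
  qed
  ultimately have "follows_tournament \<rho> (W \<inter> W') (x, y)"
    by (simp add: follows_tournament_mono)
  moreover have "(x, y) \<in> W" "(y, x) \<in> W'"
    using winner_loser_mem[OF W \<open>fst q \<noteq> snd q\<close>] winner_loser_mem[OF W' \<open>fst q \<noteq> snd q\<close>] xy yx
    by auto
  ultimately show "\<exists>x y. (x, y) \<in> W \<and> (y, x) \<in> W' \<and> follows_tournament \<rho> (W \<inter> W') (x, y)"
    by blast
qed

definition reverse_off :: "'a rel \<Rightarrow> 'a rel \<Rightarrow> 'a rel" where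
  "reverse_off S W = (W \<inter> (S \<union> S\<inverse>)) \<union> (W\<inverse> - (S \<union> S\<inverse>))"

lemma tournament_reverse_off: "tournament W \<Longrightarrow> tournament (reverse_off S W)"
  by (auto simp: reverse_off_def tournament_def total_rel_def asym_iff)

lemma subset_reverse_off: "S \<subseteq> W \<Longrightarrow> S \<subseteq> reverse_off S W"
  by (auto simp: reverse_off_def)

lemma inter_reverse_off: "tournament W \<Longrightarrow> S \<subseteq> W \<Longrightarrow> W \<inter> reverse_off S W = S"
  by (auto simp: reverse_off_def dest: tournament_asym)

lemma reverse_off_reverse_pair:
  "(x, y) \<notin> S \<Longrightarrow> (y, x) \<notin> S \<Longrightarrow>
    reverse_off S (insert (y, x) (W - {(x, y)})) = insert (x, y) (reverse_off S W - {(y, x)})"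
  by (auto simp: reverse_off_def)

text \<open>Reversing in \<open>W1\<close> the pair that
  consistency provides for \<open>W1\<close> and \<open>W2\<close> changes \<open>\<rho>\<close>, hence also changes \<open>\<rho>\<close> of the two
  tournaments reversed off \<open>S\<close>; these differ only on that pair, in the opposite direction, so
  consistency forces \<open>\<rho> W1\<close> to rank it both ways.\<close>
lemma consistent_imp_reverse_off_changes:
  assumes rm: "ranking_method \<rho>" and co: "consistent \<rho>"
    and W1: "tournament W1" "S \<subseteq> W1" and W2: "tournament W2" "S \<subseteq> W2" and "\<rho> W1 \<noteq> \<rho> W2"
  shows "\<exists>W. tournament W \<and> S \<subseteq> W \<and> \<rho> (reverse_off S W) \<noteq> \<rho> W"
proof (rule ccontr)
  assume "\<not> ?thesis"
  then have invariant: "\<rho> (reverse_off S W) = \<rho> W" if "tournament W" "S \<subseteq> W" for W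
    using that by blast
  obtain x y where xy: "(x, y) \<in> W1" and yx: "(y, x) \<in> W2"
    and follows: "follows_tournament \<rho> (W1 \<inter> W2) (x, y)"
    using consistentE[OF co W1(1) W2(1) \<open>\<rho> W1 \<noteq> \<rho> W2\<close>] .
  define W3 where "W3 = insert (y, x) (W1 - {(x, y)})"
  have W3: "tournament W3"
    unfolding W3_def by (rule tournament_reverse_pair[OF W1(1) xy])
  have "(x, y) \<notin> W2" "(y, x) \<notin> W1" "x \<noteq> y"
    using tournament_asym[OF W2(1) yx] tournament_asym[OF W1(1) xy] tournament_irrefl[OF W1(1)] xy
    by auto
  then have "(x, y) \<notin> S" "(y, x) \<notin> S" "S \<subseteq> W3" "W1 \<inter> W2 \<subseteq> W3"
    using W1(2) W2(2) by (auto simp: W3_def)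
  have "(x, y) \<in> \<rho> W1" "(x, y) \<notin> \<rho> W3"
    using follows W1 W3 xy \<open>W1 \<inter> W2 \<subseteq> W3\<close> \<open>x \<noteq> y\<close>
    by (auto simp: follows_tournament_def W3_def)
  let ?C1 = "reverse_off S W1" and ?C3 = "reverse_off S W3"
  have C1: "tournament ?C1" and C3: "tournament ?C3"
    using W1(1) W3 by (simp_all add: tournament_reverse_off)
  have "\<rho> ?C1 = \<rho> W1" "\<rho> ?C3 = \<rho> W3"
    using invariant W1 W3 \<open>S \<subseteq> W3\<close> by simp_all
  then obtain a b where ab: "(a, b) \<in> ?C1" "(b, a) \<in> ?C3"
    and follows': "follows_tournament \<rho> (?C1 \<inter> ?C3) (a, b)"
    using consistentE[OF co C1 C3] \<open>(x, y) \<in> \<rho> W1\<close> \<open>(x, y) \<notin> \<rho> W3\<close> by metis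
  have "(b, a) \<notin> ?C1"
    using tournament_asym[OF C1 ab(1)] .
  then have "(a, b) = (y, x)"
    using ab(2) reverse_off_reverse_pair[OF \<open>(x, y) \<notin> S\<close> \<open>(y, x) \<notin> S\<close>] by (auto simp: W3_def)
  then have "(y, x) \<in> \<rho> W1"
    using follows' C1 ab(1) \<open>\<rho> ?C1 = \<rho> W1\<close> by (auto simp: follows_tournament_def)
  then show False
    using \<open>(x, y) \<in> \<rho> W1\<close> ranking_asym[OF ranking_method_ranking[OF rm W1(1)]] by blast
qed

lemma exists_unranked_follows_tournament:
  fixes \<rho> :: "'a::finite rel \<Rightarrow> 'a rel"
  assumes rm: "ranking_method \<rho>" and fa: "faithful \<rho>" and co: "consistent \<rho>"
    and W: "tournament W" "S \<subseteq> W" and H: "trans H" "\<not> total_rel H"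
    and below: "\<And>W'. tournament W' \<Longrightarrow> S \<subseteq> W' \<Longrightarrow> H \<subseteq> \<rho> W'"
  shows "\<exists>p. unranked H p \<and> follows_tournament \<rho> S p"
proof (cases "\<forall>W'. tournament W' \<and> S \<subseteq> W' \<longrightarrow> \<rho> W' = \<rho> W")
  case True
  obtain p where p: "p \<in> cover (\<rho> W)" "unranked H p"
    using exists_cover_unranked[OF ranking_method_ranking[OF rm W(1)] below[OF W] H] by blast
  have "p \<in> \<rho> W' \<and> p \<in> W'" if "tournament W'" "S \<subseteq> W'" for W'
  proof -
    have "p \<in> cover (\<rho> W')"
      using True that p(1) by simp
    moreover have "cover (\<rho> W') \<subseteq> W'"
      using fa that(1) by (simp add: faithful_iff_cover_subset[OF rm])
    ultimately show ?thesis
      using cover_subset by blast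
  qed
  then have "follows_tournament \<rho> S p"
    by (simp add: follows_tournament_def)
  then show ?thesis
    using p(2) by blast
next
  case False
  then obtain W' where W': "tournament W'" "S \<subseteq> W'" and "\<rho> (reverse_off S W') \<noteq> \<rho> W'"
    using consistent_imp_reverse_off_changes[OF rm co W] by blast
  let ?C = "reverse_off S W'"
  have C: "tournament ?C" "S \<subseteq> ?C" and "W' \<inter> ?C = S"
    using W' by (simp_all add: tournament_reverse_off subset_reverse_off inter_reverse_off)
  obtain x y where xy: "(x, y) \<in> W'" and yx: "(y, x) \<in> ?C"
    and "follows_tournament \<rho> (W' \<inter> ?C) (x, y)"
    using consistentE[OF co W'(1) C(1)] \<open>\<rho> ?C \<noteq> \<rho> W'\<close> by metis
  then have follows: "follows_tournament \<rho> S (x, y)"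
    using \<open>W' \<inter> ?C = S\<close> by simp
  have "(x, y) \<in> \<rho> W'"
    using follows W' xy by (simp add: follows_tournament_def)
  then have "(y, x) \<notin> H"
    using below[OF W'] ranking_asym[OF ranking_method_ranking[OF rm W'(1)]] by blast
  moreover have "(x, y) \<notin> H"
    using below[OF C] follows C yx tournament_asym[OF C(1)] by (auto simp: follows_tournament_def)
  moreover have "x \<noteq> y"
    using xy tournament_irrefl[OF W'(1)] by blast
  ultimately show ?thesis
    using follows by (auto simp: unranked_def)
qed

definition following_strategy :: "('a rel \<Rightarrow> 'a rel) \<Rightarrow> ('a \<times> 'a) list \<Rightarrow> 'a \<times> 'a" where
  "following_strategy \<rho> = preferring_strategy (\<lambda>h. follows_tournament \<rho> (set h))"

lemma strategy_following_strategy: "strategy (following_strategy \<rho>)"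
  unfolding following_strategy_def by (rule strategy_preferring_strategy)

lemma hist_rel_history_following_strategy_subset:
  fixes \<rho> :: "'a::finite rel \<Rightarrow> 'a rel"
  assumes rm: "ranking_method \<rho>" and fa: "faithful \<rho>" and co: "consistent \<rho>"
  shows "tournament W \<Longrightarrow> hist_rel (history (following_strategy \<rho>) W t) \<subseteq> \<rho> W"
proof (induction t arbitrary: W)
  case (Suc t)
  let ?\<sigma> = "following_strategy \<rho>"
  let ?h = "history ?\<sigma> W t"
  have R: "ranking (\<rho> W)"
    using rm Suc.prems by (rule ranking_method_ranking)
  show ?case
  proof (rule hist_rel_history_Suc_subset[OF Suc.IH[OF Suc.prems] ranking_trans[OF R]])
    assume not_total: "\<not> total_rel (hist_rel ?h)"
    have below: "hist_rel ?h \<subseteq> \<rho> W'" if "tournament W'" "set ?h \<subseteq> W'" for W'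
      using Suc.IH[OF that(1)] history_eq_if_subset[OF that] by simp
    have "trans (hist_rel ?h)"
      by (simp add: hist_rel_def)
    then obtain p where "unranked (hist_rel ?h) p" "follows_tournament \<rho> (set ?h) p"
      using exists_unranked_follows_tournament[OF rm fa co Suc.prems
          set_history_subset[OF strategy_following_strategy Suc.prems] _ not_total below] by blast
    then have "unranked (hist_rel ?h) (?\<sigma> ?h)" "follows_tournament \<rho> (set ?h) (?\<sigma> ?h)"
      using preferring_strategy_prefers[where Q = "\<lambda>h. follows_tournament \<rho> (set h)"]
      by (simp_all add: following_strategy_def)
    then have "fst (?\<sigma> ?h) \<noteq> snd (?\<sigma> ?h)" "?\<sigma> ?h \<in> \<rho> W \<longleftrightarrow> ?\<sigma> ?h \<in> W"
      using Suc.prems set_history_subset[OF strategy_following_strategy Suc.prems]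
      by (simp_all add: unranked_def follows_tournament_def)
    then show "winner_loser W (?\<sigma> ?h) \<in> \<rho> W"
      using winner_loser_mem_iff[OF Suc.prems ranking_imp_tournament[OF R]] by blast
  qed
qed (simp add: hist_rel_def)

lemma faithful_consistent_imp_feasible:
  fixes \<rho> :: "'a::finite rel \<Rightarrow> 'a rel"
  assumes rm: "ranking_method \<rho>" and fa: "faithful \<rho>" and co: "consistent \<rho>"
  shows "feasible_method \<rho>"
proof -
  have "outcome (following_strategy \<rho>) W = \<rho> W" if "tournament W" for W
    using outcome_eq_if_subset[OF strategy_following_strategy ranking_method_ranking[OF rm that]]
      hist_rel_history_following_strategy_subset[OF rm fa co that]
    by (simp add: outcome_eq_hist_rel_history)
  then show ?thesis
    using strategy_following_strategy by (auto simp: feasible_method_def)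
qed

theorem corollary4:
  fixes P :: "('a::finite) rel" and \<rho> :: "'a rel \<Rightarrow> 'a rel"
  assumes "ranking P" and "ranking_method \<rho>"
  shows "(feasible_method \<rho> \<and> regret_free P \<rho>) \<longleftrightarrow>
         (faithful \<rho> \<and> consistent \<rho> \<and> efficient_method P \<rho>)"
proof
  assume "feasible_method \<rho> \<and> regret_free P \<rho>"
  then show "faithful \<rho> \<and> consistent \<rho> \<and> efficient_method P \<rho>"
    using feasible_imp_faithful[OF assms(2)] feasible_imp_consistent[OF assms(2)]
      feasible_regret_free_imp_efficient[OF assms] by blast
next
  assume "faithful \<rho> \<and> consistent \<rho> \<and> efficient_method P \<rho>"
  then show "feasible_method \<rho> \<and> regret_free P \<rho>"
    using faithful_consistent_imp_feasible[OF assms(2)] efficient_imp_regret_free[OF assms] by blast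
qed

end
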